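(* Let $W=\langle \mathcal{D},\mathcal{N},\mathrm{wr},\mathrm{gd}\rangle$ be a (1-safe) DAW-net with reachability graph $\mathit{RG}_W$, and let $\mathit{TS}_{\mathrm{pddl}(W)}$ be the transition system derived from the planning-domain encoding $\mathrm{pddl}(W)$ (as defined in the context). Then $\mathit{RG}_W$ and $\mathit{TS}_{\mathrm{pddl}(W)}$ are trace equivalent.
   Context: **Data model and guards.** A data model is $\mathcal{D}=(\mathcal{V},\Delta,\mathrm{dm},\mathrm{ord})$: $\mathcal{V}$ a set of variables; $\Delta=\{\Delta_1,\dots,\Delta_n\}$ domains (not necessarily disjoint); $\mathrm{dm}:\mathcal{V}\to\Delta$ total surjective, giving each variable its finite domain; $\mathrm{ord}$ a partial function giving, for some domains $\Delta_i$, a partial order $\le_{\Delta_i}$. An assignment is a partial function $\eta$ on $\mathcal{V}$ with $\eta(v)\in\mathrm{dm}(v)$ when defined. Guards: $\Phi ::= \mathit{true}\mid\mathrm{def}(v)\mid t_1=t_2\mid t_1\le t_2\mid\neg\Phi\mid\Phi\wedge\Phi$, $v\in\mathcal{V}$, $t_1,t_2\in\mathcal{V}\cup\bigcup_i\Delta_i$. With $t[\eta]=\eta(t)$ if $t$ is a variable on which $\eta$ is defined and $t$ otherwise: $\mathcal{D},\eta\models\mathit{true}$; $\mathcal{D},\eta\models\mathrm{def}(v)$ iff $\eta(v)$ defined; $\mathcal{D},\eta\models t_1=t_2$ iff $t_1[\eta],t_2[\eta]\notin\mathcal{V}$ and they are equal; $\mathcal{D},\eta\models t_1\le t_2$ iff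 $t_1[\eta],t_2[\eta]\in\Delta_i$ for some $i$ with $\mathrm{ord}(\Delta_i)$ defined and $t_1[\eta]\le_{\Delta_i}t_2[\eta]$; $\neg,\wedge$ classical. **DAW-nets.** Petri net $\mathcal{N}=(P,T,F)$, $F\subseteq(P\times T)\cup(T\times P)$, ${}^\bullet t=\{p\mid(p,t)\in F\}$, $t^\bullet=\{p\mid(t,p)\in F\}$, markings $M:P\to\mathbb{N}$; $\mathcal{N}$ is a workflow net with distinguished places $\mathit{start}$ and $\mathit{sink}$. A DAW-net is $W=\langle\mathcal{D},\mathcal{N},\mathrm{wr},\mathrm{gd}\rangle$ with $\mathrm{wr}(t)$ a partial function from $\mathcal{V}$ such that $\mathrm{wr}(t)(v)\subseteq\mathrm{dm}(v)$, and $\mathrm{gd}(t)$ a guard, for each $t\in T$. A state is $(M,\eta)$. A firing $(M,\eta)\xrightarrow{t}(M',\eta')$ is valid iff $\{p\mid M(p)>0\}\supseteq{}^\bullet t$; $\mathcal{D},\eta\models\mathrm{gd}(t)$; $M'(p)=M(p)-1$ for $p\in{}^\bullet t\setminus t^\bullet$, $M(p)+1$ for $p\in t^\bullet\setminus{}^\bullet t$, $M(p)$ otherwise; $\mathrm{dom}(\eta')=\mathrm{dom}(\eta)\cup\{v\mid\mathrm{wr}(t)(v)\neq\emptyset\}\setminus\{v\mid\mathrm{wr}(t)(v)=\emptyset\}$, with $\eta'(v)\in\mathrm{wr}(t)(v)$ if $v\in\mathrm{dom}(\mathrm{wr}(t))$ and $\eta'(v)=\eta(v)$ otherwise. Initial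 state $(M_s,\eta_s)$: one token in $\mathit{start}$, none elsewhere, $\eta_s$ empty. Standing assumption: $W$ is 1-safe (reachable markings have at most one token per place). $\mathcal{V}'$ denotes the finite set of variables appearing in $W$. **Reachability graph.** $\mathit{RG}_W=(T,\overline{S},\overline{s}_0,\overline{\delta})$, $\overline{s}_0=(M_s,\eta_s)$, $\overline{S}$ and $\overline{\delta}$ the least sets with $\overline{s}_0\in\overline{S}$ such that if $(M,\eta)\in\overline{S}$ and $(M,\eta)\xrightarrow{t}(M',\eta')$ is valid then $(M',\eta')\in\overline{S}$ and $((M,\eta),t,(M',\eta'))\in\overline{\delta}$. **Trace equivalence.** A path is a sequence $s_0\xrightarrow{l_1}\cdots\xrightarrow{l_n}s_n$ ($n\ge0$) from the initial state along transitions. $\mathit{RG}$ and $\mathit{TS}$ are trace equivalent iff there is an injective map $\mathrm{enc}$ from states and transitions of $\mathit{RG}$ to states and labels of $\mathit{TS}$ such that (1) every path $s_0\xrightarrow{t_1}\cdots\xrightarrow{t_n}s_n$ of $\mathit{RG}$ yields a path $\mathrm{enc}(s_0)\xrightarrow{\mathrm{enc}(t_1)}\cdots\xrightarrow{\mathrm{enc}(t_n)}\mathrm{enc}(s_n)$ of $\mathit{TS}$, and (2) for every path $s'_0\xrightarrow{t'_1}\cdots\xrightarrow{t'_n}s'_n$ of $\mathit{TS}$ there is a path $s_0\xrightarrow{t_1}\cdots\xrightarrow{t_n}s_n$ of $\mathit{RG}$ with $\mathrm{enc}(s_i)=s'_i$ and $\mathrm{enc}(t_i)=t'_i$. **State-variable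 planning.** Given objects $B$, state variables $v$ each with a range $\mathrm{Range}(v)\subseteq B$, and rigid relations over $B$, a state is an assignment of each state variable to an element of its range. Preconditions are Boolean combinations of atoms $\mathrm{true}$, $r(z_1,\dots,z_n)$ and $z_1=z_2$, where the $z_i$ are constants, parameters or state variables (state variables evaluated at the current state). An action template $\alpha$ has a head $\mathit{act}(z_1,\dots,z_k)$ with parameters ranging over finite sets, a precondition $\mathrm{pre}(\alpha)$, and effects $\mathrm{eff}(\alpha)$, a set of assignments $v\leftarrow z$; a ground action substitutes constants for the parameters. The transition function $\gamma$ is defined on $(s,a)$ iff $\mathrm{pre}(a)$ holds in $s$, and $\gamma(s,a)=\{(v,w)\mid v\leftarrow w\in\mathrm{eff}(a)\}\cup\{(v,w)\in s\mid v$ is not assigned in $\mathrm{eff}(a)\}$. **The encoding $\mathrm{pddl}(W)$.** State variables: each $v\in\mathcal{V}'$ with range $\mathrm{dm}(v)\cup\{\mathrm{null}\}$, and a Boolean state variable for each $p\in P$. Rigid relations: $\mathrm{ord}=\bigcup_i\{(o,o')\in\Delta_i^2\mid o\le_{\Delta_i}o'\}$ (over $\Delta_i$ with $\mathrm{ord}(\Delta_i)$ defined), and for $t\in T$ and $v\in\mathrm{dom}(\mathrm{wr}(t))$ the unary relation $wr_{t,v}=\mathrm{wr}(t)(v)$ if $\mathrm{wr}(t)(v)\neq\emptyset$ and $wr_{t,v}=\{\mathrm{null}\}$ otherwise. Guard translation $[\cdot]$: $[\mathit{true}]=\mathrm{true}$, $[\mathrm{def}(v)]=\neg(v=\mathrm{null})$,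 $[v=t_2]=\neg(v=\mathrm{null})\wedge(v=t_2)$, $[t_1\le t_2]=\mathrm{ord}(t_1,t_2)$, $[\neg\Phi]=\neg[\Phi]$, $[\Phi_1\wedge\Phi_2]=[\Phi_1]\wedge[\Phi_2]$. For each $t\in T$ with $\mathrm{dom}(\mathrm{wr}(t))=\{v_1,\dots,v_k\}$, the template $\alpha_t$ has head $t(z_{v_1},\dots,z_{v_k})$, precondition $[\mathrm{gd}(t)]\wedge\bigwedge_{i}wr_{t,v_i}(z_{v_i})\wedge\bigwedge_{p\in{}^\bullet t}(p=\mathrm{true})$, and effects $v_i\leftarrow z_{v_i}$ ($1\le i\le k$), $p\leftarrow\mathrm{false}$ for $p\in{}^\bullet t\setminus t^\bullet$, $p\leftarrow\mathrm{true}$ for $p\in t^\bullet$. **Mapping and transition system.** $\Psi(M,\eta)$ is the planning state mapping $v\mapsto\eta(v)$ if $\eta(v)$ is defined and $v\mapsto\mathrm{null}$ otherwise ($v\in\mathcal{V}'$), and $p\mapsto\mathrm{true}$ if $M(p)>0$, $p\mapsto\mathrm{false}$ if $M(p)=0$. $\mathit{TS}_{\mathrm{pddl}(W)}=(T,S_{\mathrm{pddl}},s_0,\delta_{\mathrm{pddl}})$ with $s_0=\Psi(\overline{s}_0)$, $S_{\mathrm{pddl}}$ the least set containing $s_0$ and closed under $s\mapsto\gamma(s,a)$ for ground actions $a$ of the templates $\alpha_t$, and $\delta_{\mathrm{pddl}}=\{(s,t,s')\in S_{\mathrm{pddl}}\times T\times S_{\mathrm{pddl}}\mid\gamma(s,a_t)=s'$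 for some ground action $a_t$ of $\alpha_t\}$. *)

theory Defs
  imports Main
begin

section \<open>Data model and guards\<close>

text \<open>Variables have type 'v, domain elements type 'd.  A data model is
  (V, Delta, dm, ord); ord is a partial function from domains to orders.\<close>

record ('v, 'd) data_model =
  D_vars :: "'v set"
  D_doms :: "'d set set"
  D_dm   :: "'v \<Rightarrow> 'd set"
  D_ord  :: "'d set \<Rightarrow> ('d \<times> 'd) set option"

definition is_partial_order :: "'d set \<Rightarrow> ('d \<times> 'd) set \<Rightarrow> bool" where
  "is_partial_order A R \<longleftrightarrow> R \<subseteq> A \<times> A \<and> (\<forall>x\<in>A. (x, x) \<in> R) \<and> antisym R \<and> trans R"

definition data_model_ok :: "('v, 'd) data_model \<Rightarrow> bool" where
  "data_model_ok D \<longleftrightarrow>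
     finite (D_doms D) \<and> (\<forall>X\<in>D_doms D. finite X) \<and>
     (\<forall>v\<in>D_vars D. D_dm D v \<in> D_doms D) \<and>
     (\<forall>X\<in>D_doms D. \<exists>v\<in>D_vars D. D_dm D v = X) \<and>
     (\<forall>X R. D_ord D X = Some R \<longrightarrow> X \<in> D_doms D \<and> is_partial_order X R)"

datatype ('v, 'd) gterm = Var 'v | Const 'd

datatype ('v, 'd) guard =
    GTrue
  | GDef 'v
  | GEq "('v, 'd) gterm" "('v, 'd) gterm"
  | GLeq "('v, 'd) gterm" "('v, 'd) gterm"
  | GNot "('v, 'd) guard"
  | GAnd "('v, 'd) guard" "('v, 'd) guard"

fun inst_term :: "('v \<rightharpoonup> 'd) \<Rightarrow> ('v, 'd) gterm \<Rightarrow> ('v, 'd) gterm" where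
  "inst_term \<eta> (Var v) = (case \<eta> v of Some d \<Rightarrow> Const d | None \<Rightarrow> Var v)"
| "inst_term \<eta> (Const d) = Const d"

fun guard_holds :: "('v, 'd) data_model \<Rightarrow> ('v \<rightharpoonup> 'd) \<Rightarrow> ('v, 'd) guard \<Rightarrow> bool" where
  "guard_holds D \<eta> GTrue = True"
| "guard_holds D \<eta> (GDef v) = (\<eta> v \<noteq> None)"
| "guard_holds D \<eta> (GEq t1 t2) =
     (\<exists>a b. inst_term \<eta> t1 = Const a \<and> inst_term \<eta> t2 = Const b \<and> a = b)"
| "guard_holds D \<eta> (GLeq t1 t2) =
     (\<exists>a b X R. inst_term \<eta> t1 = Const a \<and> inst_term \<eta> t2 = Const b \<and>
        X \<in> D_doms D \<and> D_ord D X = Some R \<and> a \<in> X \<and> b \<in> X \<and> (a, b) \<in> R)"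
| "guard_holds D \<eta> (GNot g) = (\<not> guard_holds D \<eta> g)"
| "guard_holds D \<eta> (GAnd g1 g2) = (guard_holds D \<eta> g1 \<and> guard_holds D \<eta> g2)"

fun term_vars :: "('v, 'd) gterm \<Rightarrow> 'v set" where
  "term_vars (Var v) = {v}" | "term_vars (Const d) = {}"
fun term_consts :: "('v, 'd) gterm \<Rightarrow> 'd set" where
  "term_consts (Var v) = {}" | "term_consts (Const d) = {d}"

fun guard_vars :: "('v, 'd) guard \<Rightarrow> 'v set" where
  "guard_vars GTrue = {}"
| "guard_vars (GDef v) = {v}"
| "guard_vars (GEq t1 t2) = term_vars t1 \<union> term_vars t2"
| "guard_vars (GLeq t1 t2) = term_vars t1 \<union> term_vars t2"
| "guard_vars (GNot g) = guard_vars g"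
| "guard_vars (GAnd g1 g2) = guard_vars g1 \<union> guard_vars g2"

fun guard_consts :: "('v, 'd) guard \<Rightarrow> 'd set" where
  "guard_consts GTrue = {}"
| "guard_consts (GDef v) = {}"
| "guard_consts (GEq t1 t2) = term_consts t1 \<union> term_consts t2"
| "guard_consts (GLeq t1 t2) = term_consts t1 \<union> term_consts t2"
| "guard_consts (GNot g) = guard_consts g"
| "guard_consts (GAnd g1 g2) = guard_consts g1 \<union> guard_consts g2"

section \<open>Workflow nets\<close>

record ('p, 't) wf_net =
  N_P     :: "'p set"
  N_T     :: "'t set"
  N_Fin   :: "('p \<times> 't) set"
  N_Fout  :: "('t \<times> 'p) set"
  N_start :: 'p
  N_sink  :: 'p

definition preset :: "('p, 't) wf_net \<Rightarrow> 't \<Rightarrow> 'p set" where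
  "preset N t = {p. (p, t) \<in> N_Fin N}"

definition postset :: "('p, 't) wf_net \<Rightarrow> 't \<Rightarrow> 'p set" where
  "postset N t = {p. (t, p) \<in> N_Fout N}"

definition net_edges :: "('p, 't) wf_net \<Rightarrow> ('p + 't) rel" where
  "net_edges N = {(Inl p, Inr t) | p t. (p, t) \<in> N_Fin N} \<union> {(Inr t, Inl p) | t p. (t, p) \<in> N_Fout N}"

definition net_nodes :: "('p, 't) wf_net \<Rightarrow> ('p + 't) set" where
  "net_nodes N = Inl ` N_P N \<union> Inr ` N_T N"

definition workflow_net :: "('p, 't) wf_net \<Rightarrow> bool" where
  "workflow_net N \<longleftrightarrow>
     finite (N_P N) \<and> finite (N_T N) \<and>
     N_Fin N \<subseteq> N_P N \<times> N_T N \<and> N_Fout N \<subseteq> N_T N \<times> N_P N \<and>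
     N_start N \<in> N_P N \<and> N_sink N \<in> N_P N \<and>
     (\<forall>t. (t, N_start N) \<notin> N_Fout N) \<and> (\<forall>t. (N_sink N, t) \<notin> N_Fin N) \<and>
     (\<forall>x\<in>net_nodes N. (Inl (N_start N), x) \<in> (net_edges N)\<^sup>* \<and> (x, Inl (N_sink N)) \<in> (net_edges N)\<^sup>*)"

section \<open>DAW-nets\<close>

record ('v, 'd, 'p, 't) dawnet =
  W_D  :: "('v, 'd) data_model"
  W_N  :: "('p, 't) wf_net"
  W_wr :: "'t \<Rightarrow> 'v \<rightharpoonup> 'd set"
  W_gd :: "'t \<Rightarrow> ('v, 'd) guard"

definition dawnet_ok :: "('v, 'd, 'p, 't) dawnet \<Rightarrow> bool" where
  "dawnet_ok W \<longleftrightarrow>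
     data_model_ok (W_D W) \<and> workflow_net (W_N W) \<and>
     (\<forall>t\<in>N_T (W_N W). dom (W_wr W t) \<subseteq> D_vars (W_D W) \<and>
        (\<forall>v S. W_wr W t v = Some S \<longrightarrow> S \<subseteq> D_dm (W_D W) v) \<and>
        guard_vars (W_gd W t) \<subseteq> D_vars (W_D W) \<and>
        guard_consts (W_gd W t) \<subseteq> \<Union> (D_doms (W_D W)))"

definition used_vars :: "('v, 'd, 'p, 't) dawnet \<Rightarrow> 'v set" where
  "used_vars W = (\<Union>t\<in>N_T (W_N W). dom (W_wr W t) \<union> guard_vars (W_gd W t))"

type_synonym ('v, 'd, 'p) dstate = "('p \<Rightarrow> nat) \<times> ('v \<rightharpoonup> 'd)"

definition valid_firing ::
  "('v, 'd, 'p, 't) dawnet \<Rightarrow> ('v, 'd, 'p) dstate \<Rightarrow> 't \<Rightarrow> ('v, 'd, 'p) dstate \<Rightarrow> bool" where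
  "valid_firing W s t s' \<longleftrightarrow>
     (let (M, \<eta>) = s; (M', \<eta>') = s'; N = W_N W in
       t \<in> N_T N \<and>
       preset N t \<subseteq> {p. M p > 0} \<and>
       guard_holds (W_D W) \<eta> (W_gd W t) \<and>
       (\<forall>p. M' p = (if p \<in> preset N t - postset N t then M p - 1
                     else if p \<in> postset N t - preset N t then M p + 1
                     else M p)) \<and>
       dom \<eta>' = (dom \<eta> \<union> {v. \<exists>S. W_wr W t v = Some S \<and> S \<noteq> {}}) - {v. W_wr W t v = Some {}} \<and>
       (\<forall>v S d. W_wr W t v = Some S \<longrightarrow> \<eta>' v = Some d \<longrightarrow> d \<in> S) \<and>
       (\<forall>v. v \<notin> dom (W_wr W t) \<longrightarrow> \<eta>' v = \<eta> v))"

definition init_state :: "('v, 'd, 'p, 't) dawnet \<Rightarrow> ('v, 'd, 'p) dstate" where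
  "init_state W = ((\<lambda>p. if p = N_start (W_N W) then 1 else 0), Map.empty)"

inductive_set rg_states :: "('v, 'd, 'p, 't) dawnet \<Rightarrow> ('v, 'd, 'p) dstate set"
  for W where
  rg_init: "init_state W \<in> rg_states W"
| rg_step: "s \<in> rg_states W \<Longrightarrow> valid_firing W s t s' \<Longrightarrow> s' \<in> rg_states W"

definition rg_delta :: "('v, 'd, 'p, 't) dawnet \<Rightarrow> (('v, 'd, 'p) dstate \<times> 't \<times> ('v, 'd, 'p) dstate) set" where
  "rg_delta W = {(s, t, s'). s \<in> rg_states W \<and> valid_firing W s t s'}"

definition one_safe :: "('v, 'd, 'p, 't) dawnet \<Rightarrow> bool" where
  "one_safe W \<longleftrightarrow> (\<forall>(M, \<eta>) \<in> rg_states W. \<forall>p. M p \<le> 1)"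

section \<open>Transition systems and trace equivalence\<close>

text \<open>A transition system is given by its set of states, its initial state and
  its set of labelled transitions.  A path is a list of states ss = s0..sn and a
  list of labels ls = l1..ln.\<close>
definition is_path :: "'s \<Rightarrow> ('s \<times> 'l \<times> 's) set \<Rightarrow> 's list \<Rightarrow> 'l list \<Rightarrow> bool" where
  "is_path s0 \<delta> ss ls \<longleftrightarrow> length ss = Suc (length ls) \<and> ss ! 0 = s0 \<and>
     (\<forall>i < length ls. (ss ! i, ls ! i, ss ! Suc i) \<in> \<delta>)"

definition trace_equivalent ::
  "'s1 set \<Rightarrow> 'l1 set \<Rightarrow> 's1 \<Rightarrow> ('s1 \<times> 'l1 \<times> 's1) set \<Rightarrow>
   's2 set \<Rightarrow> 'l2 set \<Rightarrow> 's2 \<Rightarrow> ('s2 \<times> 'l2 \<times> 's2) set \<Rightarrow> bool" where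
  "trace_equivalent S1 L1 i1 \<delta>1 S2 L2 i2 \<delta>2 \<longleftrightarrow>
    (\<exists>encS encL.
       inj_on encS S1 \<and> inj_on encL L1 \<and> encS ` S1 \<subseteq> S2 \<and> encL ` L1 \<subseteq> L2 \<and>
       (\<forall>ss ls. is_path i1 \<delta>1 ss ls \<longrightarrow> is_path i2 \<delta>2 (map encS ss) (map encL ls)) \<and>
       (\<forall>ss' ls'. is_path i2 \<delta>2 ss' ls' \<longrightarrow>
          (\<exists>ss ls. is_path i1 \<delta>1 ss ls \<and> map encS ss = ss' \<and> map encL ls = ls')))"

section \<open>State-variable planning\<close>

datatype ('sv, 'o, 'par) zterm = ZObj 'o | ZPar 'par | ZSV 'sv

datatype ('sv, 'o, 'par, 'rn) pform =
    FTrue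
  | FRel 'rn "('sv, 'o, 'par) zterm list"
  | FEq "('sv, 'o, 'par) zterm" "('sv, 'o, 'par) zterm"
  | FNot "('sv, 'o, 'par, 'rn) pform"
  | FAnd "('sv, 'o, 'par, 'rn) pform" "('sv, 'o, 'par, 'rn) pform"

text \<open>Planning states: partial maps from state variables to objects (defined
  exactly on the state variables of the problem).  A term is evaluated in the
  current state; parameters (which do not occur in ground actions) have no value.\<close>
fun zeval :: "('sv \<rightharpoonup> 'o) \<Rightarrow> ('sv, 'o, 'par) zterm \<Rightarrow> 'o option" where
  "zeval s (ZObj c) = Some c"
| "zeval s (ZPar x) = None"
| "zeval s (ZSV x) = s x"

fun pholds :: "('rn \<Rightarrow> 'o list set) \<Rightarrow> ('sv \<rightharpoonup> 'o) \<Rightarrow> ('sv, 'o, 'par, 'rn) pform \<Rightarrow> bool" where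
  "pholds I s FTrue = True"
| "pholds I s (FRel r zs) = (\<exists>os. those (map (zeval s) zs) = Some os \<and> os \<in> I r)"
| "pholds I s (FEq z1 z2) = (\<exists>c. zeval s z1 = Some c \<and> zeval s z2 = Some c)"
| "pholds I s (FNot f) = (\<not> pholds I s f)"
| "pholds I s (FAnd f g) = (pholds I s f \<and> pholds I s g)"

fun zsubst :: "('par \<Rightarrow> 'o) \<Rightarrow> ('sv, 'o, 'par) zterm \<Rightarrow> ('sv, 'o, 'par) zterm" where
  "zsubst \<sigma> (ZObj c) = ZObj c"
| "zsubst \<sigma> (ZPar x) = ZObj (\<sigma> x)"
| "zsubst \<sigma> (ZSV x) = ZSV x"

fun psubst :: "('par \<Rightarrow> 'o) \<Rightarrow> ('sv, 'o, 'par, 'rn) pform \<Rightarrow> ('sv, 'o, 'par, 'rn) pform" where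
  "psubst \<sigma> FTrue = FTrue"
| "psubst \<sigma> (FRel r zs) = FRel r (map (zsubst \<sigma>) zs)"
| "psubst \<sigma> (FEq z1 z2) = FEq (zsubst \<sigma> z1) (zsubst \<sigma> z2)"
| "psubst \<sigma> (FNot f) = FNot (psubst \<sigma> f)"
| "psubst \<sigma> (FAnd f g) = FAnd (psubst \<sigma> f) (psubst \<sigma> g)"

definition BigAnd :: "('sv, 'o, 'par, 'rn) pform set \<Rightarrow> ('sv, 'o, 'par, 'rn) pform" where
  "BigAnd A = foldr FAnd (SOME xs. set xs = A \<and> distinct xs) FTrue"

text \<open>Action templates: head name with parameters (each ranging over a finite
  set), precondition, effects (a set of assignments sv <- z, given as a partial
  map from state variables to terms).\<close>
record ('a, 'sv, 'o, 'par, 'rn) action_template =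
  act_name   :: 'a
  act_params :: "'par set"
  act_range  :: "'par \<Rightarrow> 'o set"
  act_pre    :: "('sv, 'o, 'par, 'rn) pform"
  act_eff    :: "'sv \<rightharpoonup> ('sv, 'o, 'par) zterm"

record ('a, 'sv, 'o, 'par, 'rn) ground_action =
  ga_name :: 'a
  ga_pre  :: "('sv, 'o, 'par, 'rn) pform"
  ga_eff  :: "'sv \<rightharpoonup> ('sv, 'o, 'par) zterm"

definition ground_actions ::
  "('a, 'sv, 'o, 'par, 'rn) action_template \<Rightarrow> ('a, 'sv, 'o, 'par, 'rn) ground_action set" where
  "ground_actions \<alpha> =
     {\<lparr>ga_name = act_name \<alpha>, ga_pre = psubst \<sigma> (act_pre \<alpha>),
       ga_eff = (\<lambda>x. map_option (zsubst \<sigma>) (act_eff \<alpha> x))\<rparr> | \<sigma>.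
        \<forall>x\<in>act_params \<alpha>. \<sigma> x \<in> act_range \<alpha> x}"

definition gamma ::
  "('rn \<Rightarrow> 'o list set) \<Rightarrow> ('sv \<rightharpoonup> 'o) \<Rightarrow> ('a, 'sv, 'o, 'par, 'rn) ground_action \<Rightarrow> ('sv \<rightharpoonup> 'o) option" where
  "gamma I s a = (if pholds I s (ga_pre a)
     then Some (\<lambda>x. case ga_eff a x of Some z \<Rightarrow> zeval s z | None \<Rightarrow> s x)
     else None)"

section \<open>The encoding pddl(W)\<close>

datatype 'd obj = Val 'd | Null | OTrue | OFalse

datatype ('v, 'p) svar = SVar 'v | SPlace 'p

datatype ('t, 'v) rname = OrdRel | WrRel 't 'v

type_synonym ('v, 'd, 'p, 't) pddl_pform = "(('v, 'p) svar, 'd obj, 'v, ('t, 'v) rname) pform"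
type_synonym ('v, 'd, 'p) pstate = "('v, 'p) svar \<rightharpoonup> 'd obj"

definition pddl_objects :: "('v, 'd, 'p, 't) dawnet \<Rightarrow> 'd obj set" where
  "pddl_objects W = Val ` \<Union> (D_doms (W_D W)) \<union> {Null, OTrue, OFalse}"

definition pddl_rigid :: "('v, 'd, 'p, 't) dawnet \<Rightarrow> ('t, 'v) rname \<Rightarrow> 'd obj list set" where
  "pddl_rigid W r = (case r of
      OrdRel \<Rightarrow> {[Val a, Val b] | a b. \<exists>X R. X \<in> D_doms (W_D W) \<and> D_ord (W_D W) X = Some R \<and>
                                        a \<in> X \<and> b \<in> X \<and> (a, b) \<in> R}
    | WrRel t v \<Rightarrow> (case W_wr W t v of
                      None \<Rightarrow> {}
                    | Some S \<Rightarrow> if S \<noteq> {} then {[Val a] | a. a \<in> S} else {[Null]}))"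

fun tr_term :: "('v, 'd) gterm \<Rightarrow> (('v, 'p) svar, 'd obj, 'v) zterm" where
  "tr_term (Var v) = ZSV (SVar v)"
| "tr_term (Const d) = ZObj (Val d)"

fun tr_guard :: "('v, 'd) guard \<Rightarrow> ('v, 'd, 'p, 't) pddl_pform" where
  "tr_guard GTrue = FTrue"
| "tr_guard (GDef v) = FNot (FEq (ZSV (SVar v)) (ZObj Null))"
| "tr_guard (GEq t1 t2) = FAnd (FNot (FEq (tr_term t1) (ZObj Null))) (FEq (tr_term t1) (tr_term t2))"
| "tr_guard (GLeq t1 t2) = FRel OrdRel [tr_term t1, tr_term t2]"
| "tr_guard (GNot g) = FNot (tr_guard g)"
| "tr_guard (GAnd g1 g2) = FAnd (tr_guard g1) (tr_guard g2)"

definition pddl_template ::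
  "('v, 'd, 'p, 't) dawnet \<Rightarrow> 't \<Rightarrow> ('t, ('v, 'p) svar, 'd obj, 'v, ('t, 'v) rname) action_template" where
  "pddl_template W t =
     \<lparr>act_name = t,
      act_params = dom (W_wr W t),
      act_range = (\<lambda>_. pddl_objects W),
      act_pre = FAnd (tr_guard (W_gd W t))
                 (FAnd (BigAnd {FRel (WrRel t v) [ZPar v] | v. v \<in> dom (W_wr W t)})
                       (BigAnd {FEq (ZSV (SPlace p)) (ZObj OTrue) | p. p \<in> preset (W_N W) t})),
      act_eff = (\<lambda>x. case x of
                   SVar v \<Rightarrow> if v \<in> dom (W_wr W t) then Some (ZPar v) else None
                 | SPlace p \<Rightarrow> if p \<in> postset (W_N W) t then Some (ZObj OTrue)
                               else if p \<in> preset (W_N W) t then Some (ZObj OFalse)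
                               else None)\<rparr>"

definition Psi :: "('v, 'd, 'p, 't) dawnet \<Rightarrow> ('v, 'd, 'p) dstate \<Rightarrow> ('v, 'd, 'p) pstate" where
  "Psi W s = (\<lambda>x. case x of
      SVar v \<Rightarrow> if v \<in> used_vars W then (case snd s v of Some d \<Rightarrow> Some (Val d) | None \<Rightarrow> Some Null) else None
    | SPlace p \<Rightarrow> if p \<in> N_P (W_N W) then Some (if fst s p > 0 then OTrue else OFalse) else None)"

inductive_set pddl_states :: "('v, 'd, 'p, 't) dawnet \<Rightarrow> ('v, 'd, 'p) pstate set"
  for W where
  ps_init: "Psi W (init_state W) \<in> pddl_states W"
| ps_step: "s \<in> pddl_states W \<Longrightarrow> t \<in> N_T (W_N W) \<Longrightarrow> a \<in> ground_actions (pddl_template W t) \<Longrightarrow>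
            gamma (pddl_rigid W) s a = Some s' \<Longrightarrow> s' \<in> pddl_states W"

definition pddl_delta :: "('v, 'd, 'p, 't) dawnet \<Rightarrow> (('v, 'd, 'p) pstate \<times> 't \<times> ('v, 'd, 'p) pstate) set" where
  "pddl_delta W = {(s, t, s'). s \<in> pddl_states W \<and> s' \<in> pddl_states W \<and> t \<in> N_T (W_N W) \<and>
                     (\<exists>a \<in> ground_actions (pddl_template W t). gamma (pddl_rigid W) s a = Some s')}"

end

theory Submission
  imports Defs
begin

text \<open>
  Reachable states of a 1-safe DAW-net have 0/1 markings vanishing outside the places and
  assignments undefined outside V', so \<open>Psi\<close> is injective on them.  The heart of the proof
  is a one-step correspondence: the ground action of \<open>\<alpha>\<^sub>t\<close> with parameters \<open>\<sigma>\<close> is applicable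
  in \<open>Psi (M, \<eta>)\<close> exactly when \<open>t\<close> is enabled at \<open>(M, \<eta>)\<close> and \<open>\<sigma>\<close> satisfies the relations
  \<open>wr\<^sub>t\<^sub>,\<^sub>v\<close>, and then it leads to \<open>Psi\<close> of the firing that writes the values \<open>\<sigma>\<close> (with
  null meaning "undefined").  One-safety is what makes \<open>p \<leftarrow> false\<close> on input places agree
  with removing their token.
\<close>

lemma is_path_Nil_iff: "is_path i \<delta> ss [] \<longleftrightarrow> ss = [i]"
  by (cases ss) (auto simp: is_path_def)

lemma is_path_snoc_iff:
  "is_path i \<delta> (ss @ [s]) (ls @ [l]) \<longleftrightarrow> is_path i \<delta> ss ls \<and> (last ss, l, s) \<in> \<delta>"
proof (cases "length ss = Suc (length ls)")
  case True
  then have "last ss = ss ! length ls" by (metis diff_Suc_1 last_conv_nth list.size(3) nat.distinct(1))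
  with True have "(\<forall>j < Suc (length ls). ((ss @ [s]) ! j, (ls @ [l]) ! j, (ss @ [s]) ! Suc j) \<in> \<delta>) \<longleftrightarrow>
      (\<forall>j < length ls. (ss ! j, ls ! j, ss ! Suc j) \<in> \<delta>) \<and> (last ss, l, s) \<in> \<delta>"
    by (simp add: All_less_Suc nth_append conj_commute)
  with True show ?thesis by (simp add: is_path_def nth_append)
qed (auto simp: is_path_def)

lemma is_path_map:
  assumes "\<And>s l s'. (s, l, s') \<in> \<delta>1 \<Longrightarrow> (f s, g l, f s') \<in> \<delta>2"
    and "is_path i \<delta>1 ss ls"
  shows "is_path (f i) \<delta>2 (map f ss) (map g ls)"
  using assms by (auto simp: is_path_def)

lemma is_path_last_in:
  assumes "i \<in> S" and "\<And>s l s'. (s, l, s') \<in> \<delta> \<Longrightarrow> s' \<in> S"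
  shows "is_path i \<delta> ss ls \<Longrightarrow> last ss \<in> S"
proof (induction ls arbitrary: ss rule: rev_induct)
  case Nil
  then show ?case using assms(1) by (simp add: is_path_Nil_iff)
next
  case (snoc l ls)
  then obtain ss0 s where "ss = ss0 @ [s]"
    by (cases ss rule: rev_exhaust) (auto simp: is_path_def)
  with snoc.prems show ?case using assms(2) by (auto simp: is_path_snoc_iff)
qed

lemma is_path_lift:
  assumes "i \<in> S" and "\<And>s l s'. (s, l, s') \<in> \<delta>1 \<Longrightarrow> s' \<in> S"
    and "\<And>s l' s2. s \<in> S \<Longrightarrow> (f s, l', s2) \<in> \<delta>2 \<Longrightarrow> \<exists>l s'. (s, l, s') \<in> \<delta>1 \<and> g l = l' \<and> f s' = s2"
  shows "is_path (f i) \<delta>2 ss' ls' \<Longrightarrow> \<exists>ss ls. is_path i \<delta>1 ss ls \<and> map f ss = ss' \<and> map g ls = ls'"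
proof (induction ls' arbitrary: ss' rule: rev_induct)
  case Nil
  then show ?case by (auto simp: is_path_Nil_iff)
next
  case (snoc l' ls')
  then obtain ss0' s2 where ss': "ss' = ss0' @ [s2]"
    by (cases ss' rule: rev_exhaust) (auto simp: is_path_def)
  with snoc.prems have path0: "is_path (f i) \<delta>2 ss0' ls'" and step: "(last ss0', l', s2) \<in> \<delta>2"
    by (auto simp: is_path_snoc_iff)
  obtain ss ls where path: "is_path i \<delta>1 ss ls" and "map f ss = ss0'" and "map g ls = ls'"
    using snoc.IH[OF path0] by blast
  moreover have "ss \<noteq> []" using path by (auto simp: is_path_def)
  ultimately have "f (last ss) = last ss0'" by (auto simp: last_map)
  moreover have "last ss \<in> S" using is_path_last_in[OF assms(1,2) path] .
  ultimately obtain l s' where "(last ss, l, s') \<in> \<delta>1" "g l = l'" "f s' = s2"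
    using assms(3) step by metis
  with path \<open>map f ss = ss0'\<close> \<open>map g ls = ls'\<close> show ?case
    by (intro exI[of _ "ss @ [s']"] exI[of _ "ls @ [l]"]) (simp add: is_path_snoc_iff ss')
qed

lemma trace_equivalentI:
  assumes "inj_on f S1" "f ` S1 \<subseteq> S2" "inj_on g L1" "g ` L1 \<subseteq> L2"
    and "i1 \<in> S1" "f i1 = i2"
    and "\<And>s l s'. (s, l, s') \<in> \<delta>1 \<Longrightarrow> s' \<in> S1"
    and "\<And>s l s'. (s, l, s') \<in> \<delta>1 \<Longrightarrow> (f s, g l, f s') \<in> \<delta>2"
    and "\<And>s l' s2. s \<in> S1 \<Longrightarrow> (f s, l', s2) \<in> \<delta>2 \<Longrightarrow> \<exists>l s'. (s, l, s') \<in> \<delta>1 \<and> g l = l' \<and> f s' = s2"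
  shows "trace_equivalent S1 L1 i1 \<delta>1 S2 L2 i2 \<delta>2"
  unfolding trace_equivalent_def
proof (intro exI[of _ f] exI[of _ g] conjI allI impI)
  fix ss ls
  assume "is_path i1 \<delta>1 ss ls"
  with assms(8) have "is_path (f i1) \<delta>2 (map f ss) (map g ls)" by (rule is_path_map)
  with assms(6) show "is_path i2 \<delta>2 (map f ss) (map g ls)" by simp
next
  fix ss' ls'
  assume "is_path i2 \<delta>2 ss' ls'"
  with assms(6) have "is_path (f i1) \<delta>2 ss' ls'" by simp
  with assms(5,7,9) show "\<exists>ss ls. is_path i1 \<delta>1 ss ls \<and> map f ss = ss' \<and> map g ls = ls'"
    by (rule is_path_lift)
qed (fact assms(1-4))+

definition obj_of :: "'d option \<Rightarrow> 'd obj" where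
  "obj_of = case_option Null Val"

fun val_of :: "'d obj \<Rightarrow> 'd option" where
  "val_of (Val d) = Some d"
| "val_of _ = None"

definition fired_marking :: "('p, 't) wf_net \<Rightarrow> 't \<Rightarrow> ('p \<Rightarrow> nat) \<Rightarrow> 'p \<Rightarrow> nat" where
  "fired_marking N t M p =
     (if p \<in> preset N t - postset N t then M p - 1
      else if p \<in> postset N t - preset N t then M p + 1
      else M p)"

definition pddl_action ::
  "('v, 'd, 'p, 't) dawnet \<Rightarrow> 't \<Rightarrow> ('v \<Rightarrow> 'd obj) \<Rightarrow> ('t, ('v, 'p) svar, 'd obj, 'v, ('t, 'v) rname) ground_action" where
  "pddl_action W t \<sigma> =
     \<lparr>ga_name = t, ga_pre = psubst \<sigma> (act_pre (pddl_template W t)),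
      ga_eff = (\<lambda>x. map_option (zsubst \<sigma>) (act_eff (pddl_template W t) x))\<rparr>"

lemma ground_actions_pddl_template:
  "ground_actions (pddl_template W t) =
     {pddl_action W t \<sigma> | \<sigma>. \<forall>v\<in>dom (W_wr W t). \<sigma> v \<in> pddl_objects W}"
  by (auto simp: ground_actions_def pddl_action_def pddl_template_def)

lemma Psi_SVar: "Psi W s (SVar v) = (if v \<in> used_vars W then Some (obj_of (snd s v)) else None)"
  by (simp add: Psi_def obj_of_def split: option.split)

lemma Psi_SPlace:
  "Psi W s (SPlace p) = (if p \<in> N_P (W_N W) then Some (if fst s p > 0 then OTrue else OFalse) else None)"
  by (simp add: Psi_def)

lemma preset_subset_places: "dawnet_ok W \<Longrightarrow> preset (W_N W) t \<subseteq> N_P (W_N W)"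
  by (auto simp: dawnet_ok_def workflow_net_def preset_def)

lemma postset_subset_places: "dawnet_ok W \<Longrightarrow> postset (W_N W) t \<subseteq> N_P (W_N W)"
  by (auto simp: dawnet_ok_def workflow_net_def postset_def)

lemma written_vars_subset_used_vars: "t \<in> N_T (W_N W) \<Longrightarrow> dom (W_wr W t) \<subseteq> used_vars W"
  by (auto simp: used_vars_def)

lemma guard_vars_subset_used_vars: "t \<in> N_T (W_N W) \<Longrightarrow> guard_vars (W_gd W t) \<subseteq> used_vars W"
  by (auto simp: used_vars_def)

lemma written_value_in_pddl_objects:
  assumes "dawnet_ok W" "t \<in> N_T (W_N W)" "W_wr W t v = Some S" "d \<in> S"
  shows "Val d \<in> pddl_objects W"
proof -
  have "S \<subseteq> D_dm (W_D W) v" "v \<in> D_vars (W_D W)"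
    using assms(1-3) by (auto simp: dawnet_ok_def domI subset_iff)
  moreover have "D_dm (W_D W) v \<in> D_doms (W_D W)" if "v \<in> D_vars (W_D W)"
    using assms(1) that by (simp add: dawnet_ok_def data_model_ok_def)
  ultimately show ?thesis using assms(4) by (auto simp: pddl_objects_def)
qed

lemma obj_of_val_of_WrRel:
  "[b] \<in> pddl_rigid W (WrRel t v) \<Longrightarrow> obj_of (val_of b) = b"
  by (auto simp: pddl_rigid_def obj_of_def split: option.splits if_splits)

lemma obj_of_in_WrRel_iff:
  assumes "W_wr W t v = Some S"
  shows "[obj_of x] \<in> pddl_rigid W (WrRel t v) \<longleftrightarrow> (if S = {} then x = None else x \<in> Some ` S)"
  using assms by (cases x) (auto simp: pddl_rigid_def obj_of_def)

lemma fired_marking_pos_iff: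
  assumes "preset N t \<subseteq> {p. M p > 0}" and "M p \<le> 1"
  shows "fired_marking N t M p > 0 \<longleftrightarrow> p \<in> postset N t \<or> (p \<notin> preset N t \<and> M p > 0)"
  using assms by (auto simp: fired_marking_def)

lemma valid_firing_iff:
  "valid_firing W (M, \<eta>) t (M', \<eta>') \<longleftrightarrow>
     t \<in> N_T (W_N W) \<and> preset (W_N W) t \<subseteq> {p. M p > 0} \<and> guard_holds (W_D W) \<eta> (W_gd W t) \<and>
     M' = fired_marking (W_N W) t M \<and>
     (\<forall>v\<in>dom (W_wr W t). [obj_of (\<eta>' v)] \<in> pddl_rigid W (WrRel t v)) \<and>
     (\<forall>v. v \<notin> dom (W_wr W t) \<longrightarrow> \<eta>' v = \<eta> v)"
proof -
  let ?dom = "(dom \<eta> \<union> {v. \<exists>S. W_wr W t v = Some S \<and> S \<noteq> {}}) - {v. W_wr W t v = Some {}}"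
  let ?vals = "\<forall>v S d. W_wr W t v = Some S \<longrightarrow> \<eta>' v = Some d \<longrightarrow> d \<in> S"
  let ?frame = "\<forall>v. v \<notin> dom (W_wr W t) \<longrightarrow> \<eta>' v = \<eta> v"
  have marking: "(\<forall>p. M' p = (if p \<in> preset (W_N W) t - postset (W_N W) t then M p - 1
                     else if p \<in> postset (W_N W) t - preset (W_N W) t then M p + 1
                     else M p)) \<longleftrightarrow> M' = fired_marking (W_N W) t M"
    unfolding fun_eq_iff fired_marking_def by (rule refl)
  have pointwise:
    "(v \<in> dom \<eta>' \<longleftrightarrow> v \<in> ?dom) \<and> (\<forall>S d. W_wr W t v = Some S \<longrightarrow> \<eta>' v = Some d \<longrightarrow> d \<in> S) \<longleftrightarrow>
     (v \<in> dom (W_wr W t) \<longrightarrow> [obj_of (\<eta>' v)] \<in> pddl_rigid W (WrRel t v))"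
    if ?frame for v
    using that[rule_format, of v] by (cases "W_wr W t v") (auto simp: obj_of_in_WrRel_iff domIff dest: sym)
  have writes: "dom \<eta>' = ?dom \<and> ?vals \<and> ?frame \<longleftrightarrow>
      (\<forall>v\<in>dom (W_wr W t). [obj_of (\<eta>' v)] \<in> pddl_rigid W (WrRel t v)) \<and> ?frame"
  proof (cases ?frame)
    case True
    have "dom \<eta>' = ?dom \<and> ?vals \<longleftrightarrow>
        (\<forall>v. (v \<in> dom \<eta>' \<longleftrightarrow> v \<in> ?dom) \<and> (\<forall>S d. W_wr W t v = Some S \<longrightarrow> \<eta>' v = Some d \<longrightarrow> d \<in> S))"
      by (simp only: set_eq_iff all_conj_distrib)
    also have "\<dots> \<longleftrightarrow> (\<forall>v\<in>dom (W_wr W t). [obj_of (\<eta>' v)] \<in> pddl_rigid W (WrRel t v))"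
      unfolding Ball_def by (rule all_cong1) (rule pointwise[OF True])
    finally show ?thesis using True by simp
  qed blast
  show ?thesis
    unfolding valid_firing_def Let_def prod.case marking writes by (rule refl)
qed

lemma rg_states_support:
  assumes "dawnet_ok W" and "(M, \<eta>) \<in> rg_states W"
  shows "p \<notin> N_P (W_N W) \<Longrightarrow> M p = 0" and "v \<notin> used_vars W \<Longrightarrow> \<eta> v = None"
proof -
  have "(\<forall>p. p \<notin> N_P (W_N W) \<longrightarrow> fst s p = 0) \<and> (\<forall>v. v \<notin> used_vars W \<longrightarrow> snd s v = None)"
    if "s \<in> rg_states W" for s
    using that
  proof induction
    case rg_init
    then show ?case using assms(1) by (auto simp: init_state_def dawnet_ok_def workflow_net_def)
  next
    case (rg_step s t s')
    obtain M \<eta> M' \<eta>' where s: "s = (M, \<eta>)" "s' = (M', \<eta>')" by (cases s; cases s')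
    with rg_step have IH: "\<forall>p. p \<notin> N_P (W_N W) \<longrightarrow> M p = 0" "\<forall>v. v \<notin> used_vars W \<longrightarrow> \<eta> v = None"
      and firing: "valid_firing W (M, \<eta>) t (M', \<eta>')" by auto
    from firing have t: "t \<in> N_T (W_N W)" and M': "M' = fired_marking (W_N W) t M"
      and frame: "\<forall>v. v \<notin> dom (W_wr W t) \<longrightarrow> \<eta>' v = \<eta> v"
      by (simp_all add: valid_firing_iff)
    moreover have "M' p = 0" if "p \<notin> N_P (W_N W)" for p
      using that IH preset_subset_places[OF assms(1), of t] postset_subset_places[OF assms(1), of t]
      by (auto simp: M' fired_marking_def)
    moreover have "\<eta>' v = None" if "v \<notin> used_vars W" for v
      using that IH frame written_vars_subset_used_vars[OF t] by (metis subsetD)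
    ultimately show ?case by (simp add: s)
  qed
  with assms(2) show "p \<notin> N_P (W_N W) \<Longrightarrow> M p = 0" and "v \<notin> used_vars W \<Longrightarrow> \<eta> v = None"
    by auto
qed

lemma rg_states_marking_le_one: "one_safe W \<Longrightarrow> (M, \<eta>) \<in> rg_states W \<Longrightarrow> M p \<le> 1"
  by (auto simp: one_safe_def)

lemma Psi_inj_on_rg_states:
  assumes "dawnet_ok W" and "one_safe W"
  shows "inj_on (Psi W) (rg_states W)"
proof (rule inj_onI)
  fix s1 s2
  assume s1: "s1 \<in> rg_states W" and s2: "s2 \<in> rg_states W" and eq: "Psi W s1 = Psi W s2"
  obtain M1 \<eta>1 M2 \<eta>2 where s: "s1 = (M1, \<eta>1)" "s2 = (M2, \<eta>2)" by (cases s1; cases s2)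
  have "M1 p = M2 p" for p
  proof (cases "p \<in> N_P (W_N W)")
    case True
    with fun_cong[OF eq, of "SPlace p"] have "M1 p > 0 \<longleftrightarrow> M2 p > 0"
      by (auto simp: Psi_SPlace s split: if_splits)
    moreover have "M1 p \<le> 1" "M2 p \<le> 1"
      using rg_states_marking_le_one[OF assms(2)] s1 s2 s by auto
    ultimately show ?thesis by linarith
  next
    case False
    with rg_states_support(1)[OF assms(1)] s1 s2 show ?thesis unfolding s by metis
  qed
  moreover have "\<eta>1 v = \<eta>2 v" for v
  proof (cases "v \<in> used_vars W")
    case True
    with fun_cong[OF eq, of "SVar v"] show ?thesis
      by (auto simp: Psi_SVar s obj_of_def split: option.splits)
  next
    case False
    with rg_states_support(2)[OF assms(1)] s1 s2 show ?thesis unfolding s by metis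
  qed
  ultimately show "s1 = s2" using s by auto
qed

lemma zsubst_tr_term: "zsubst \<sigma> (tr_term u) = tr_term u"
  by (cases u) simp_all

lemma psubst_tr_guard: "psubst \<sigma> (tr_guard g) = tr_guard g"
  by (induction g) (simp_all add: zsubst_tr_term)

lemma pholds_tr_guard_iff:
  assumes "guard_vars g \<subseteq> used_vars W"
  shows "pholds (pddl_rigid W) (Psi W (M, \<eta>)) (tr_guard g) \<longleftrightarrow> guard_holds (W_D W) \<eta> g"
  using assms
proof (induction g)
  case (GEq t1 t2)
  then show ?case
    by (cases t1; cases t2) (auto simp: Psi_SVar obj_of_def split: option.splits)
next
  case (GLeq t1 t2)
  then show ?case
    by (cases t1; cases t2) (auto simp: Psi_SVar obj_of_def pddl_rigid_def split: option.splits)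
qed (auto simp: Psi_SVar obj_of_def split: option.splits)

lemma pholds_psubst_BigAnd:
  assumes "finite A"
  shows "pholds I s (psubst \<sigma> (BigAnd A)) \<longleftrightarrow> (\<forall>f\<in>A. pholds I s (psubst \<sigma> f))"
proof -
  obtain xs where "set xs = A \<and> distinct xs" "BigAnd A = foldr FAnd xs FTrue"
    using someI_ex[OF finite_distinct_list[OF assms]] unfolding BigAnd_def by blast
  moreover have "pholds I s (psubst \<sigma> (foldr FAnd ys FTrue)) \<longleftrightarrow> (\<forall>f\<in>set ys. pholds I s (psubst \<sigma> f))" for ys
    by (induction ys) auto
  ultimately show ?thesis by simp
qed

lemma pddl_precondition_iff:
  fixes W :: "('v, 'd, 'p, 't) dawnet"
  assumes "dawnet_ok W" and "finite (used_vars W)" and "t \<in> N_T (W_N W)"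
  shows "pholds (pddl_rigid W) (Psi W (M, \<eta>)) (psubst \<sigma> (act_pre (pddl_template W t))) \<longleftrightarrow>
     guard_holds (W_D W) \<eta> (W_gd W t) \<and>
     (\<forall>v\<in>dom (W_wr W t). [\<sigma> v] \<in> pddl_rigid W (WrRel t v)) \<and>
     preset (W_N W) t \<subseteq> {p. M p > 0}"
proof -
  have "finite (dom (W_wr W t))"
    using assms(2) written_vars_subset_used_vars[OF assms(3)] by (rule finite_subset[rotated])
  moreover have "finite (N_P (W_N W))"
    using assms(1) by (simp add: dawnet_ok_def workflow_net_def)
  then have "finite (preset (W_N W) t)"
    using preset_subset_places[OF assms(1)] by (rule finite_subset[rotated])
  ultimately show ?thesis
    using preset_subset_places[OF assms(1), of t] guard_vars_subset_used_vars[OF assms(3)]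
    by (auto simp: pddl_template_def psubst_tr_guard pholds_tr_guard_iff setcompr_eq_image
        pholds_psubst_BigAnd Psi_SPlace)
qed

lemma gamma_pddl_action_Psi:
  fixes W :: "('v, 'd, 'p, 't) dawnet"
  assumes ok: "dawnet_ok W" and safe: "one_safe W" and fin: "finite (used_vars W)"
    and reach: "(M, \<eta>) \<in> rg_states W" and firing: "valid_firing W (M, \<eta>) t (M', \<eta>')"
    and \<sigma>: "\<forall>v\<in>dom (W_wr W t). \<sigma> v = obj_of (\<eta>' v)"
  shows "gamma (pddl_rigid W) (Psi W (M, \<eta>)) (pddl_action W t \<sigma>) = Some (Psi W (M', \<eta>'))"
proof -
  from firing have t: "t \<in> N_T (W_N W)" and enabled: "preset (W_N W) t \<subseteq> {p. M p > 0}"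
    and guard: "guard_holds (W_D W) \<eta> (W_gd W t)" and M': "M' = fired_marking (W_N W) t M"
    and written: "\<forall>v\<in>dom (W_wr W t). [obj_of (\<eta>' v)] \<in> pddl_rigid W (WrRel t v)"
    and frame: "\<forall>v. v \<notin> dom (W_wr W t) \<longrightarrow> \<eta>' v = \<eta> v"
    by (simp_all add: valid_firing_iff)
  have pre: "pholds (pddl_rigid W) (Psi W (M, \<eta>)) (ga_pre (pddl_action W t \<sigma>))"
    using pddl_precondition_iff[OF ok fin t] guard written \<sigma> enabled by (simp add: pddl_action_def)
  have "(case ga_eff (pddl_action W t \<sigma>) x of Some z \<Rightarrow> zeval (Psi W (M, \<eta>)) z | None \<Rightarrow> Psi W (M, \<eta>) x) =
      Psi W (M', \<eta>') x" for x
  proof (cases x)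
    case (SVar v)
    then show ?thesis using \<sigma> frame written_vars_subset_used_vars[OF t]
      by (auto simp: pddl_action_def pddl_template_def Psi_SVar)
  next
    case (SPlace p)
    have "M' p > 0 \<longleftrightarrow> p \<in> postset (W_N W) t \<or> (p \<notin> preset (W_N W) t \<and> M p > 0)"
      unfolding M' by (rule fired_marking_pos_iff[OF enabled rg_states_marking_le_one[OF safe reach]])
    then show ?thesis using SPlace preset_subset_places[OF ok, of t] postset_subset_places[OF ok, of t]
      by (auto simp: pddl_action_def pddl_template_def Psi_SPlace)
  qed
  with pre show ?thesis by (simp add: gamma_def fun_eq_iff)
qed

lemma valid_firing_imp_pddl_step:
  fixes W :: "('v, 'd, 'p, 't) dawnet"
  assumes ok: "dawnet_ok W" and safe: "one_safe W" and fin: "finite (used_vars W)"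
    and reach: "(M, \<eta>) \<in> rg_states W" and firing: "valid_firing W (M, \<eta>) t (M', \<eta>')"
  shows "\<exists>a\<in>ground_actions (pddl_template W t). gamma (pddl_rigid W) (Psi W (M, \<eta>)) a = Some (Psi W (M', \<eta>'))"
proof -
  from firing have t: "t \<in> N_T (W_N W)"
    and written: "\<forall>v\<in>dom (W_wr W t). [obj_of (\<eta>' v)] \<in> pddl_rigid W (WrRel t v)"
    by (simp_all add: valid_firing_iff)
  have "obj_of (\<eta>' v) \<in> pddl_objects W" if "v \<in> dom (W_wr W t)" for v
  proof -
    from that obtain S where S: "W_wr W t v = Some S" by auto
    with written that have "if S = {} then \<eta>' v = None else \<eta>' v \<in> Some ` S"
      using obj_of_in_WrRel_iff by metis
    with S show ?thesis
      using written_value_in_pddl_objects[OF ok t S]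
      by (auto simp: obj_of_def pddl_objects_def split: if_splits)
  qed
  then have "pddl_action W t (\<lambda>v. obj_of (\<eta>' v)) \<in> ground_actions (pddl_template W t)"
    by (auto simp: ground_actions_pddl_template)
  moreover have "gamma (pddl_rigid W) (Psi W (M, \<eta>)) (pddl_action W t (\<lambda>v. obj_of (\<eta>' v))) =
      Some (Psi W (M', \<eta>'))"
    by (rule gamma_pddl_action_Psi[OF ok safe fin reach firing]) simp
  ultimately show ?thesis by blast
qed

lemma pddl_step_imp_valid_firing:
  fixes W :: "('v, 'd, 'p, 't) dawnet"
  assumes ok: "dawnet_ok W" and safe: "one_safe W" and fin: "finite (used_vars W)"
    and reach: "(M, \<eta>) \<in> rg_states W" and t: "t \<in> N_T (W_N W)"
    and a: "a \<in> ground_actions (pddl_template W t)"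
    and step: "gamma (pddl_rigid W) (Psi W (M, \<eta>)) a = Some s2"
  shows "\<exists>s'. valid_firing W (M, \<eta>) t s' \<and> Psi W s' = s2"
proof -
  from a obtain \<sigma> where a_eq: "a = pddl_action W t \<sigma>"
    by (auto simp: ground_actions_pddl_template)
  with step have "pholds (pddl_rigid W) (Psi W (M, \<eta>)) (psubst \<sigma> (act_pre (pddl_template W t)))"
    by (auto simp: gamma_def pddl_action_def split: if_splits)
  then have guard: "guard_holds (W_D W) \<eta> (W_gd W t)"
    and wr: "\<forall>v\<in>dom (W_wr W t). [\<sigma> v] \<in> pddl_rigid W (WrRel t v)"
    and enabled: "preset (W_N W) t \<subseteq> {p. M p > 0}"
    by (simp_all add: pddl_precondition_iff[OF ok fin t])
  define \<eta>' where "\<eta>' v = (if v \<in> dom (W_wr W t) then val_of (\<sigma> v) else \<eta> v)" for v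
  have \<sigma>: "\<forall>v\<in>dom (W_wr W t). \<sigma> v = obj_of (\<eta>' v)"
  proof
    fix v
    assume "v \<in> dom (W_wr W t)"
    with wr show "\<sigma> v = obj_of (\<eta>' v)" by (simp add: \<eta>'_def obj_of_val_of_WrRel[of "\<sigma> v" W t v])
  qed
  have firing: "valid_firing W (M, \<eta>) t (fired_marking (W_N W) t M, \<eta>')"
  proof -
    have "\<forall>v\<in>dom (W_wr W t). [obj_of (\<eta>' v)] \<in> pddl_rigid W (WrRel t v)"
      using wr \<sigma> by simp
    moreover have "\<forall>v. v \<notin> dom (W_wr W t) \<longrightarrow> \<eta>' v = \<eta> v"
      by (simp add: \<eta>'_def)
    ultimately show ?thesis using t enabled guard by (simp add: valid_firing_iff)
  qed
  from gamma_pddl_action_Psi[OF ok safe fin reach firing \<sigma>] step a_eq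
  have "Psi W (fired_marking (W_N W) t M, \<eta>') = s2" by simp
  with firing show ?thesis by blast
qed

lemma Psi_rg_states_subset:
  assumes "dawnet_ok W" and "one_safe W" and "finite (used_vars W)"
  shows "Psi W ` rg_states W \<subseteq> pddl_states W"
proof -
  have "Psi W s \<in> pddl_states W" if "s \<in> rg_states W" for s
    using that
  proof induction
    case rg_init
    then show ?case by (rule ps_init)
  next
    case (rg_step s t s')
    obtain M \<eta> M' \<eta>' where s: "s = (M, \<eta>)" "s' = (M', \<eta>')" by (cases s; cases s')
    with rg_step have "t \<in> N_T (W_N W)" by (simp add: valid_firing_iff)
    moreover obtain a where "a \<in> ground_actions (pddl_template W t)"
      and "gamma (pddl_rigid W) (Psi W s) a = Some (Psi W s')"
      using valid_firing_imp_pddl_step[OF assms] rg_step s by blast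
    ultimately show ?case using rg_step.IH by (blast intro: ps_step)
  qed
  then show ?thesis by blast
qed

lemma rg_delta_imp_pddl_delta:
  assumes "dawnet_ok W" and "one_safe W" and "finite (used_vars W)"
    and "(s, t, s') \<in> rg_delta W"
  shows "(Psi W s, t, Psi W s') \<in> pddl_delta W"
proof -
  obtain M \<eta> M' \<eta>' where s: "s = (M, \<eta>)" "s' = (M', \<eta>')" by (cases s; cases s')
  with assms(4) have reach: "(M, \<eta>) \<in> rg_states W" and firing: "valid_firing W (M, \<eta>) t (M', \<eta>')"
    by (simp_all add: rg_delta_def)
  have "(M', \<eta>') \<in> rg_states W" using reach firing by (rule rg_step)
  with reach have "Psi W s \<in> pddl_states W" "Psi W s' \<in> pddl_states W"
    using Psi_rg_states_subset[OF assms(1-3)] s by auto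
  moreover have "t \<in> N_T (W_N W)" using firing by (simp add: valid_firing_iff)
  ultimately show ?thesis
    using valid_firing_imp_pddl_step[OF assms(1-3) reach firing] s by (simp add: pddl_delta_def)
qed

lemma pddl_delta_imp_rg_delta:
  assumes "dawnet_ok W" and "one_safe W" and "finite (used_vars W)"
    and "s \<in> rg_states W" and "(Psi W s, t, s2) \<in> pddl_delta W"
  shows "\<exists>s'. (s, t, s') \<in> rg_delta W \<and> Psi W s' = s2"
proof -
  obtain M \<eta> where s: "s = (M, \<eta>)" by (cases s)
  from assms(5) obtain a where "t \<in> N_T (W_N W)" "a \<in> ground_actions (pddl_template W t)"
    "gamma (pddl_rigid W) (Psi W (M, \<eta>)) a = Some s2"
    by (auto simp: pddl_delta_def s)
  with pddl_step_imp_valid_firing[OF assms(1-3)] assms(4) show ?thesis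
    by (fastforce simp: rg_delta_def s)
qed

theorem mainTheorem2:
  fixes W :: "('v, 'd, 'p, 't) dawnet"
  assumes "dawnet_ok W"
    and "one_safe W"
    and "finite (used_vars W)"
  shows "trace_equivalent
           (rg_states W) (N_T (W_N W)) (init_state W) (rg_delta W)
           (pddl_states W) (N_T (W_N W)) (Psi W (init_state W)) (pddl_delta W)"
proof (rule trace_equivalentI[where f = "Psi W" and g = id])
  show "inj_on (Psi W) (rg_states W)" by (rule Psi_inj_on_rg_states[OF assms(1,2)])
  show "Psi W ` rg_states W \<subseteq> pddl_states W" by (rule Psi_rg_states_subset[OF assms])
  show "\<And>s t s'. (s, t, s') \<in> rg_delta W \<Longrightarrow> s' \<in> rg_states W"
    by (auto simp: rg_delta_def intro: rg_step)
  show "\<And>s t s'. (s, t, s') \<in> rg_delta W \<Longrightarrow> (Psi W s, id t, Psi W s') \<in> pddl_delta W"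
    using rg_delta_imp_pddl_delta[OF assms] by simp
  show "\<And>s t s2. s \<in> rg_states W \<Longrightarrow> (Psi W s, t, s2) \<in> pddl_delta W \<Longrightarrow>
      \<exists>t' s'. (s, t', s') \<in> rg_delta W \<and> id t' = t \<and> Psi W s' = s2"
    using pddl_delta_imp_rg_delta[OF assms] by simp
qed (simp_all add: rg_init)

end
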